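(* Consider a radial three-phase distribution grid modeled by a tree on buses $\{0,1,\ldots,N\}$ with feeder bus $0$, where every bus $n\in\{1,\ldots,N\}$ has a unique parent bus $\pi_n<n$; line $n$ connects $\pi_n$ and $n$, and $\mathcal{C}_n$ denotes the set of children of bus $n$. For each line $n$ let $\mathbf{Z}_n=\mathbf{Z}_n^{\top}\in\mathbb{C}^{3\times 3}$ be its phase impedance matrix and define $\tilde{\mathbf{Z}}_n:=\operatorname{diag}(\boldsymbol{\alpha}^* )\mathbf{Z}_n\operatorname{diag}(\boldsymbol{\alpha})$, where $\boldsymbol{\alpha}:=[1~\alpha~\alpha^2]^{\top}$ and $\alpha=e^{-j2\pi/3}$. Let $\mathbf{s}_n=\mathbf{p}_n+j\mathbf{q}_n\in\mathbb{C}^3$ (with $\mathbf{p}_n,\mathbf{q}_n\in\mathbb{R}^3$), $\mathbf{v}_n\in\mathbb{R}^3$ and $\mathbf{S}_n\in\mathbb{C}^3$, $n=1,\ldots,N$, satisfy for all $n\in\{1,\ldots,N\}$ \[\mathbf{s}_n=\sum_{k\in\mathcal{C}_n}\mathbf{S}_k-\mathbf{S}_n,\qquad \mathbf{v}_{\pi_n}-\mathbf{v}_n=2\,\mathrm{Re}\big[\tilde{\mathbf{Z}}_n^*\mathbf{S}_n\big],\] where $\mathbf{v}_0:=v_0\mathbf{1}_3$ for a scalar $v_0$, $^*$ denotes entrywise complex conjugation and $\mathrm{Re}$ is taken entrywise. Stack $\mathbf{v}:=[\mathbf{v}_1^{\top}\cdots\mathbf{v}_N^{\top}]^{\top}$,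 $\mathbf{p}:=[\mathbf{p}_1^{\top}\cdots\mathbf{p}_N^{\top}]^{\top}$, $\mathbf{q}:=[\mathbf{q}_1^{\top}\cdots\mathbf{q}_N^{\top}]^{\top}\in\mathbb{R}^{3N}$. Then \[\mathbf{v}=\mathbf{R}\mathbf{p}+\mathbf{X}\mathbf{q}+v_0\mathbf{1}_{3N},\] where $\mathbf{R}:=2\mathbf{M}\,\mathrm{bdiag}(\{\mathrm{Re}[\tilde{\mathbf{Z}}_n]\})\mathbf{M}^{\top}$, $\mathbf{X}:=2\mathbf{M}\,\mathrm{bdiag}(\{\mathrm{Im}[\tilde{\mathbf{Z}}_n]\})\mathbf{M}^{\top}$ and $\mathbf{M}:=\mathbf{T}(\mathbf{I}_3\otimes\mathbf{F})\mathbf{T}^{\top}$.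
   Context: The reduced branch-bus incidence matrix $\mathbf{A}\in\mathbb{R}^{N\times N}$ is obtained from the full branch-bus incidence matrix $\tilde{\mathbf{A}}=[\mathbf{a}_0~\mathbf{A}]\in\mathbb{R}^{N\times(N+1)}$ (rows indexed by lines, columns by buses $0,\ldots,N$), whose row $n$ has entry $+1$ in column $\pi_n$, entry $-1$ in column $n$, and zeros elsewhere, by deleting the column $\mathbf{a}_0$ of bus $0$. The matrix $\mathbf{F}:=-\mathbf{A}^{-1}$. $\mathrm{bdiag}(\{\mathbf{Y}_n\})$ is the block diagonal matrix with blocks $\mathbf{Y}_1,\ldots,\mathbf{Y}_N$. The permutation matrix $\mathbf{T}\in\mathbb{R}^{3N\times 3N}$ is $\mathbf{T}:=[\mathbf{I}_3\otimes\mathbf{e}_1^{\top};\ \ldots;\ \mathbf{I}_3\otimes\mathbf{e}_N^{\top}]$ (blocks stacked vertically), where $\mathbf{e}_n$ is the $n$-th column of $\mathbf{I}_N$; it maps a vector stacked per phase (all buses of phase $a$, then $b$, then $c$) to the same vector stacked per bus. *)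

theory Defs
  imports Complex_Main "Jordan_Normal_Form.Matrix"
begin

definition kron :: "'a::times mat \<Rightarrow> 'a mat \<Rightarrow> 'a mat" where
  "kron A B = mat (dim_row A * dim_row B) (dim_col A * dim_col B)
     (\<lambda>(i,j). A $$ (i div dim_row B, j div dim_col B) * B $$ (i mod dim_row B, j mod dim_col B))"

definition children :: "nat \<Rightarrow> (nat \<Rightarrow> nat) \<Rightarrow> nat \<Rightarrow> nat set" where
  "children N par n = {k \<in> {1..N}. par k = n}"

text \<open>Reduced branch-bus incidence matrix A (row l = line l+1, column b = bus b+1).
  Full incidence row n has +1 at column par n and -1 at column n; column of bus 0 removed.\<close>
definition red_incidence :: "nat \<Rightarrow> (nat \<Rightarrow> nat) \<Rightarrow> real mat" where
  "red_incidence N par = mat N N (\<lambda>(l,b).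
      (if par (l+1) = b+1 then 1 else 0) - (if l = b then 1 else 0))"

definition inv_mat :: "nat \<Rightarrow> real mat \<Rightarrow> real mat" where
  "inv_mat N A = (THE B. B \<in> carrier_mat N N \<and> inverts_mat A B \<and> inverts_mat B A)"

definition Fmat :: "nat \<Rightarrow> (nat \<Rightarrow> nat) \<Rightarrow> real mat" where
  "Fmat N par = - inv_mat N (red_incidence N par)"

text \<open>Permutation matrix T = [I3 kron e_1^T; ...; I3 kron e_N^T] (3-row blocks stacked).\<close>
definition Tmat :: "nat \<Rightarrow> real mat" where
  "Tmat N = mat (3*N) (3*N) (\<lambda>(r,c).
      kron (1\<^sub>m 3) (mat_of_row (unit_vec N (r div 3))) $$ (r mod 3, c))"

definition Mmat :: "nat \<Rightarrow> (nat \<Rightarrow> nat) \<Rightarrow> real mat" where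
  "Mmat N par = Tmat N * kron (1\<^sub>m 3) (Fmat N par) * transpose_mat (Tmat N)"

definition alpha :: complex where
  "alpha = exp (- \<i> * 2 * pi / 3)"

definition alpha_vec :: "complex vec" where
  "alpha_vec = vec 3 (\<lambda>i. alpha ^ i)"

definition Ztilde :: "complex mat \<Rightarrow> complex mat" where
  "Ztilde Z = mat_diag 3 (\<lambda>i. cnj (alpha_vec $ i)) * Z * mat_diag 3 (\<lambda>i. alpha_vec $ i)"

definition bdiag :: "nat \<Rightarrow> (nat \<Rightarrow> 'a::zero mat) \<Rightarrow> 'a mat" where
  "bdiag N Y = diag_block_mat (map Y [1..<N+1])"

definition Rmat :: "nat \<Rightarrow> (nat \<Rightarrow> nat) \<Rightarrow> (nat \<Rightarrow> complex mat) \<Rightarrow> real mat" where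
  "Rmat N par Z = 2 \<cdot>\<^sub>m (Mmat N par * bdiag N (\<lambda>n. map_mat Re (Ztilde (Z n))) * transpose_mat (Mmat N par))"

definition Xmat :: "nat \<Rightarrow> (nat \<Rightarrow> nat) \<Rightarrow> (nat \<Rightarrow> complex mat) \<Rightarrow> real mat" where
  "Xmat N par Z = 2 \<cdot>\<^sub>m (Mmat N par * bdiag N (\<lambda>n. map_mat Im (Ztilde (Z n))) * transpose_mat (Mmat N par))"

definition stack :: "nat \<Rightarrow> (nat \<Rightarrow> 'a vec) \<Rightarrow> 'a vec" where
  "stack N x = vec (3*N) (\<lambda>i. x (i div 3 + 1) $ (i mod 3))"

end

theory Submission
  imports Defs "Jordan_Normal_Form.Determinant"
begin

text \<open>
  Since every parent precedes its child, the reduced incidence matrix A is lower triangular with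
  diagonal -1, hence invertible, and F = -A^-1. Stacked per bus, the voltage equations read
  (A (x) I_3)(v - v0 1) = 2 (bdiag(Re Ztilde) Re S + bdiag(Im Ztilde) Im S), because
  Re (cnj z * s) = Re z * Re s + Im z * Im s, while the power balance reads p = (A (x) I_3)^T Re S
  and q = (A (x) I_3)^T Im S. The perfect shuffle T turns I_3 (x) F into F (x) I_3, so
  M = -(A (x) I_3)^-1, and eliminating the line flows Re S = -M^T p, Im S = -M^T q gives
  v - v0 1 = R p + X q.
\<close>

section \<open>Kronecker products\<close>

lemma sum_lessThan_mult_nat:
  "(\<Sum>k<m * n. f k) = (\<Sum>i<m. \<Sum>j<n. f (i * n + j))" for m n :: nat
proof -
  have shift: "sum f {i * n..<i * n + n} = (\<Sum>j<n. f (i * n + j))" for i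
    using sum.shift_bounds_nat_ivl[of f 0 "i * n" n] by (simp add: atLeast0LessThan add.commute)
  show ?thesis
    using sum.nat_group[of f n m] by (simp add: shift)
qed

lemma kron_carrier_mat:
  "A \<in> carrier_mat a b \<Longrightarrow> B \<in> carrier_mat c d \<Longrightarrow> kron A B \<in> carrier_mat (a * c) (b * d)"
  unfolding kron_def by auto

lemma index_kron:
  assumes "A \<in> carrier_mat a b" "B \<in> carrier_mat c d" "i < a * c" "j < b * d"
  shows "kron A B $$ (i, j) = A $$ (i div c, j div d) * B $$ (i mod c, j mod d)"
  using assms unfolding kron_def by auto

lemma div_mod_less_of_less_mult:
  fixes i :: nat assumes "i < a * b" shows "i div b < a" "i mod b < b"
proof -
  show "i div b < a" using assms by (simp add: less_mult_imp_div_less mult.commute)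
  show "i mod b < b" using assms by (cases "b = 0") auto
qed

lemma kron_mult_kron:
  fixes A :: "'a :: comm_semiring_0 mat"
  assumes A: "A \<in> carrier_mat a a'" and B: "B \<in> carrier_mat b b'"
    and C: "C \<in> carrier_mat a' a''" and D: "D \<in> carrier_mat b' b''"
  shows "kron A B * kron C D = kron (A * C) (B * D)"
proof (rule eq_matI)
  fix i j assume "i < dim_row (kron (A * C) (B * D))" "j < dim_col (kron (A * C) (B * D))"
  then have i: "i < a * b" and j: "j < a'' * b''"
    using kron_carrier_mat[OF mult_carrier_mat[OF A C] mult_carrier_mat[OF B D]] by auto
  note i' = div_mod_less_of_less_mult[OF i] and j' = div_mod_less_of_less_mult[OF j]
  have "(kron A B * kron C D) $$ (i, j)
      = (\<Sum>k<a' * b'. kron A B $$ (i, k) * kron C D $$ (k, j))"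
    using kron_carrier_mat[OF A B] kron_carrier_mat[OF C D] i j
    by (simp add: scalar_prod_def atLeast0LessThan)
  also have "\<dots> = (\<Sum>r<a'. \<Sum>s<b'. (A $$ (i div b, r) * C $$ (r, j div b''))
                                    * (B $$ (i mod b, s) * D $$ (s, j mod b'')))"
    unfolding sum_lessThan_mult_nat
  proof (intro sum.cong refl)
    fix r s assume "r \<in> {..<a'}" "s \<in> {..<b'}"
    have "r * b' + s < Suc r * b'" using \<open>s \<in> {..<b'}\<close> by simp
    also have "\<dots> \<le> a' * b'" using \<open>r \<in> {..<a'}\<close> by (intro mult_right_mono) auto
    finally have rs: "r * b' + s < a' * b'" .
    have "(r * b' + s) div b' = r" "(r * b' + s) mod b' = s" using \<open>s \<in> {..<b'}\<close> by auto
    then show "kron A B $$ (i, r * b' + s) * kron C D $$ (r * b' + s, j) =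
        A $$ (i div b, r) * C $$ (r, j div b'') * (B $$ (i mod b, s) * D $$ (s, j mod b''))"
      using index_kron[OF A B i rs] index_kron[OF C D rs j] by (simp add: ac_simps)
  qed
  also have "\<dots> = (A * C) $$ (i div b, j div b'') * (B * D) $$ (i mod b, j mod b'')"
    using A B C D i' j' by (simp add: scalar_prod_def atLeast0LessThan sum_product)
  also have "\<dots> = kron (A * C) (B * D) $$ (i, j)"
    using index_kron[OF mult_carrier_mat[OF A C] mult_carrier_mat[OF B D] i j] by simp
  finally show "(kron A B * kron C D) $$ (i, j) = kron (A * C) (B * D) $$ (i, j)" .
qed (use A B C D in \<open>auto simp: kron_def\<close>)

lemma transpose_kron:
  "transpose_mat (kron A B) = kron (transpose_mat A) (transpose_mat B)"
  by (rule eq_matI) (auto simp: kron_def div_mod_less_of_less_mult)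

lemma kron_one_mat: "kron (1\<^sub>m a) (1\<^sub>m b) = (1\<^sub>m (a * b) :: 'a :: semiring_1 mat)"
proof (rule eq_matI)
  fix i j assume "i < dim_row (1\<^sub>m (a * b) :: 'a mat)" "j < dim_col (1\<^sub>m (a * b) :: 'a mat)"
  then have i: "i < a * b" and j: "j < a * b" by auto
  have "(i div b = j div b \<and> i mod b = j mod b) \<longleftrightarrow> i = j"
    by (metis div_mult_mod_eq)
  then show "kron (1\<^sub>m a) (1\<^sub>m b) $$ (i, j) = (1\<^sub>m (a * b) :: 'a mat) $$ (i, j)"
    using i j div_mod_less_of_less_mult[OF i] div_mod_less_of_less_mult[OF j] by (auto simp: kron_def)
qed (auto simp: kron_def)

lemma kron_uminus_left: "kron (- A) B = - kron A (B :: 'a :: ring mat)"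
  by (rule eq_matI) (auto simp: kron_def div_mod_less_of_less_mult)

section \<open>Block-diagonal matrices and the perfect shuffle\<close>

lemma index_diag_block_mat_uniform:
  assumes "\<And>A. A \<in> set As \<Longrightarrow> A \<in> carrier_mat k k"
  shows "diag_block_mat As \<in> carrier_mat (k * length As) (k * length As)"
    and "i < k * length As \<Longrightarrow> j < k * length As \<Longrightarrow> diag_block_mat As $$ (i, j) =
      (if i div k = j div k then (As ! (i div k)) $$ (i mod k, j mod k) else 0)"
  using assms
proof (induction As arbitrary: i j)
  case (Cons A As)
  { case 1 then show ?case using Cons.IH(1) by (auto simp: Let_def) }
  { case 2
    have A: "A \<in> carrier_mat k k" and D: "diag_block_mat As \<in> carrier_mat (k * length As) (k * length As)"
      using 2 Cons.IH(1) by auto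
    have k: "0 < k" using 2 by (cases k) auto
    have ij: "i < k * length (A # As)" "j < k * length (A # As)" by fact+
    show ?case
    proof (cases "i < k \<and> j < k")
      case True then show ?thesis using A D by (simp add: Let_def)
    next
      case False
      have IH: "i - k < k * length As \<Longrightarrow> j - k < k * length As \<Longrightarrow> diag_block_mat As $$ (i - k, j - k) =
        (if (i - k) div k = (j - k) div k then (As ! ((i - k) div k)) $$ ((i - k) mod k, (j - k) mod k) else 0)"
        using Cons.IH(2) 2 by auto
      show ?thesis
        using False A D k ij IH by (auto simp: Let_def le_div_geq le_mod_geq not_less)
    qed }
qed simp_all

lemma
  assumes Y: "\<And>n. Y n \<in> carrier_mat k k"
  shows bdiag_carrier: "bdiag N Y \<in> carrier_mat (k * N) (k * N)"
    and index_bdiag: "i < k * N \<Longrightarrow> j < k * N \<Longrightarrow>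
      bdiag N Y $$ (i, j) = (if i div k = j div k then Y (Suc (i div k)) $$ (i mod k, j mod k) else 0)"
proof -
  have "\<And>A. A \<in> set (map Y [1..<N + 1]) \<Longrightarrow> A \<in> carrier_mat k k" using Y by auto
  note blocks = index_diag_block_mat_uniform[of "map Y [1..<N + 1]" k, OF this, unfolded length_map length_upt]
  show "bdiag N Y \<in> carrier_mat (k * N) (k * N)"
    using blocks(1) by (simp add: bdiag_def)
  assume ij: "i < k * N" "j < k * N"
  then have "i div k < N" by (simp add: less_mult_imp_div_less mult.commute)
  then show "bdiag N Y $$ (i, j) = (if i div k = j div k then Y (Suc (i div k)) $$ (i mod k, j mod k) else 0)"
    using blocks(2)[of i j] ij by (simp add: bdiag_def del: upt_Suc)
qed

lemma index_mult_selection_conj: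
  fixes P X :: "'a :: semiring_1 mat"
  assumes P: "P \<in> carrier_mat n n" and X: "X \<in> carrier_mat n n"
    and sel: "\<And>i c. i < n \<Longrightarrow> c < n \<Longrightarrow> P $$ (i, c) = (if c = \<sigma> i then 1 else 0)"
    and \<sigma>: "\<And>i. i < n \<Longrightarrow> \<sigma> i < n" and i: "i < n" and j: "j < n"
  shows "(P * X * transpose_mat P) $$ (i, j) = X $$ (\<sigma> i, \<sigma> j)"
proof -
  have PX: "(P * X) $$ (k, l) = X $$ (\<sigma> k, l)" if k: "k < n" and l: "l < n" for k l
  proof -
    have "(P * X) $$ (k, l) = (\<Sum>c\<in>{0..<n}. P $$ (k, c) * X $$ (c, l))"
      using P X k l by (simp add: scalar_prod_def)
    also have "\<dots> = (\<Sum>c\<in>{0..<n}. if c = \<sigma> k then X $$ (c, l) else 0)"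
      by (rule sum.cong) (auto simp: sel k)
    finally show ?thesis using \<sigma>[OF k] by simp
  qed
  have "(P * X * transpose_mat P) $$ (i, j) = (\<Sum>c\<in>{0..<n}. (P * X) $$ (i, c) * P $$ (j, c))"
    using P X i j by (simp add: scalar_prod_def del: assoc_mult_mat)
  also have "\<dots> = (\<Sum>c\<in>{0..<n}. if c = \<sigma> j then (P * X) $$ (i, c) else 0)"
    by (rule sum.cong) (auto simp: sel j)
  finally show ?thesis using \<sigma> i j by (simp add: PX)
qed

lemma index_Tmat:
  assumes i: "i < 3 * N" and c: "c < 3 * N"
  shows "Tmat N $$ (i, c) = (if c = i mod 3 * N + i div 3 then 1 else 0)"
proof -
  have "c div N < 3" "c mod N < N" using div_mod_less_of_less_mult[OF c] .
  moreover have "i div 3 < N" using i by auto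
  moreover have "(i mod 3 = c div N \<and> c mod N = i div 3) \<longleftrightarrow> c = i mod 3 * N + i div 3"
  proof
    assume "i mod 3 = c div N \<and> c mod N = i div 3"
    then show "c = i mod 3 * N + i div 3" by (metis div_mult_mod_eq)
  next
    assume "c = i mod 3 * N + i div 3"
    then show "i mod 3 = c div N \<and> c mod N = i div 3" using \<open>i div 3 < N\<close> by simp
  qed
  ultimately show ?thesis
    using i c unfolding Tmat_def kron_def by (auto simp: mat_of_row_def)
qed

lemma perfect_shuffle_lt:
  fixes i :: nat assumes "i < 3 * N" shows "i mod 3 * N + i div 3 < 3 * N"
proof -
  have "i mod 3 * N + i div 3 < i mod 3 * N + N" using assms by auto
  also have "\<dots> = Suc (i mod 3) * N" by simp
  also have "\<dots> \<le> 3 * N" by (rule mult_right_mono) auto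
  finally show ?thesis .
qed

lemma Tmat_conj_kron_one:
  assumes B: "B \<in> carrier_mat N N"
  shows "Tmat N * kron (1\<^sub>m 3) B * transpose_mat (Tmat N) = kron B (1\<^sub>m 3)"
proof (rule eq_matI)
  have T: "Tmat N \<in> carrier_mat (3 * N) (3 * N)" by (simp add: Tmat_def)
  have K: "kron (1\<^sub>m 3) B \<in> carrier_mat (3 * N) (3 * N)" using kron_carrier_mat[OF one_carrier_mat B] .
  fix i j assume "i < dim_row (kron B (1\<^sub>m 3))" "j < dim_col (kron B (1\<^sub>m 3))"
  then have i: "i < 3 * N" and j: "j < 3 * N" using kron_carrier_mat[OF B one_carrier_mat, of 3] by auto
  have "(Tmat N * kron (1\<^sub>m 3) B * transpose_mat (Tmat N)) $$ (i, j)
      = kron (1\<^sub>m 3) B $$ (i mod 3 * N + i div 3, j mod 3 * N + j div 3)"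
    by (rule index_mult_selection_conj[OF T K index_Tmat perfect_shuffle_lt i j])
  also have "\<dots> = kron B (1\<^sub>m 3) $$ (i, j)"
    using i j B perfect_shuffle_lt[OF i] perfect_shuffle_lt[OF j]
    by (auto simp: index_kron[OF one_carrier_mat B] index_kron[OF B one_carrier_mat])
  finally show "(Tmat N * kron (1\<^sub>m 3) B * transpose_mat (Tmat N)) $$ (i, j) = kron B (1\<^sub>m 3) $$ (i, j)" .
qed (use kron_carrier_mat[OF B one_carrier_mat, of 3] in \<open>auto simp: Tmat_def\<close>)

section \<open>The reduced incidence matrix\<close>

lemma inv_mat_is_inverse:
  fixes A :: "real mat"
  assumes A: "A \<in> carrier_mat n n" and det: "det A \<noteq> 0"
  shows "inv_mat n A \<in> carrier_mat n n" "A * inv_mat n A = 1\<^sub>m n" "inv_mat n A * A = 1\<^sub>m n"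
proof -
  obtain B where B: "B \<in> carrier_mat n n" "B * A = 1\<^sub>m n" "A * B = 1\<^sub>m n"
    using det_non_zero_imp_unit[OF A det] unfolding Units_def ring_mat_def by auto
  have "inv_mat n A = B"
    unfolding inv_mat_def
  proof (rule the_equality)
    show "B \<in> carrier_mat n n \<and> inverts_mat A B \<and> inverts_mat B A"
      using A B by (auto simp: inverts_mat_def)
    fix B' assume "B' \<in> carrier_mat n n \<and> inverts_mat A B' \<and> inverts_mat B' A"
    then have B': "B' \<in> carrier_mat n n" "B' * A = 1\<^sub>m n" using A by (auto simp: inverts_mat_def)
    have "B' = B' * (A * B)" using B'(1) B(3) by simp
    also have "\<dots> = (B' * A) * B" using A B(1) B'(1) by simp
    finally show "B' = B" using B'(2) B(1) by simp
  qed
  then show "inv_mat n A \<in> carrier_mat n n" "A * inv_mat n A = 1\<^sub>m n" "inv_mat n A * A = 1\<^sub>m n"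
    using B by simp_all
qed

lemma red_incidence_carrier: "red_incidence N par \<in> carrier_mat N N"
  by (simp add: red_incidence_def)

lemma det_red_incidence:
  assumes tree: "\<And>n. n \<in> {1..N} \<Longrightarrow> par n < n"
  shows "det (red_incidence N par) = (-1) ^ N"
proof -
  have "det (red_incidence N par) = prod_list (diag_mat (red_incidence N par))"
  proof (rule det_lower_triangular[OF _ red_incidence_carrier])
    fix i j :: nat assume "i < j" "j < N"
    then show "red_incidence N par $$ (i, j) = 0"
      using tree[of "Suc i"] by (simp add: red_incidence_def)
  qed
  also have "\<dots> = (\<Prod>i<N. -1)"
    unfolding prod_list_diag_prod atLeast0LessThan
  proof (rule prod.cong)
    fix i assume "i \<in> {..<N}"
    then show "red_incidence N par $$ (i, i) = -1"
      using tree[of "Suc i"] by (auto simp: red_incidence_def)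
  qed (simp add: red_incidence_def)
  finally show ?thesis by simp
qed

lemma Fmat_inverse:
  assumes tree: "\<And>n. n \<in> {1..N} \<Longrightarrow> par n < n"
  shows "Fmat N par \<in> carrier_mat N N" "Fmat N par * red_incidence N par = - 1\<^sub>m N"
    "red_incidence N par * Fmat N par = - 1\<^sub>m N"
proof -
  have "det (red_incidence N par) \<noteq> 0" using det_red_incidence[OF tree] by simp
  note inv = inv_mat_is_inverse[OF red_incidence_carrier this]
  show "Fmat N par \<in> carrier_mat N N" "Fmat N par * red_incidence N par = - 1\<^sub>m N"
    "red_incidence N par * Fmat N par = - 1\<^sub>m N"
    using inv red_incidence_carrier[of N par] by (auto simp: Fmat_def)
qed

lemma Mmat_inverse:
  assumes tree: "\<And>n. n \<in> {1..N} \<Longrightarrow> par n < n"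
  shows "Mmat N par \<in> carrier_mat (3 * N) (3 * N)"
    "Mmat N par * kron (red_incidence N par) (1\<^sub>m 3) = - 1\<^sub>m (3 * N)"
    "kron (red_incidence N par) (1\<^sub>m 3) * Mmat N par = - 1\<^sub>m (3 * N)"
proof -
  note F = Fmat_inverse[OF tree] and A = red_incidence_carrier[of N par]
  have M: "Mmat N par = kron (Fmat N par) (1\<^sub>m 3)"
    unfolding Mmat_def by (rule Tmat_conj_kron_one[OF F(1)])
  show "Mmat N par \<in> carrier_mat (3 * N) (3 * N)"
    using kron_carrier_mat[OF F(1) one_carrier_mat[of 3]] by (simp add: M mult.commute)
  show "Mmat N par * kron (red_incidence N par) (1\<^sub>m 3) = - 1\<^sub>m (3 * N)"
    "kron (red_incidence N par) (1\<^sub>m 3) * Mmat N par = - 1\<^sub>m (3 * N)"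
    unfolding M using F A
    by (simp_all add: kron_mult_kron[of _ N N _ 3 3 _ N _ 3] kron_uminus_left kron_one_mat mult.commute)
qed

section \<open>Stacked per-bus vectors\<close>

lemma dim_stack[simp]: "dim_vec (stack N x) = 3 * N"
  by (simp add: stack_def)

lemma stack_carrier: "stack N x \<in> carrier_vec (3 * N)"
  by (rule carrier_vecI) simp

lemma index_stack[simp]: "i < 3 * N \<Longrightarrow> stack N x $ i = x (Suc (i div 3)) $ (i mod 3)"
  by (simp add: stack_def)

lemma stack_eqI:
  assumes "\<And>n \<phi>. n \<in> {1..N} \<Longrightarrow> \<phi> < 3 \<Longrightarrow> x n $ \<phi> = y n $ \<phi>"
  shows "stack N x = stack N y"
  using assms by (intro eq_vecI) auto

lemma index_kron_one_mult_stack: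
  fixes B :: "'a :: comm_semiring_1 mat"
  assumes B: "B \<in> carrier_mat N N" and i: "i < 3 * N"
  shows "(kron B (1\<^sub>m 3) *\<^sub>v stack N x) $ i = (\<Sum>c<N. B $$ (i div 3, c) * x (Suc c) $ (i mod 3))"
proof -
  have K: "kron B (1\<^sub>m 3) \<in> carrier_mat (N * 3) (N * 3)"
    using kron_carrier_mat[OF B one_carrier_mat] .
  have "(kron B (1\<^sub>m 3) *\<^sub>v stack N x) $ i = (\<Sum>l<N * 3. kron B (1\<^sub>m 3) $$ (i, l) * stack N x $ l)"
    using K i by (simp add: scalar_prod_def atLeast0LessThan mult.commute)
  also have "\<dots> = (\<Sum>c<N. \<Sum>\<psi><3. B $$ (i div 3, c) * ((1\<^sub>m 3 :: 'a mat) $$ (i mod 3, \<psi>) * x (Suc c) $ \<psi>))"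
    unfolding sum_lessThan_mult_nat
  proof (intro sum.cong refl)
    fix c \<psi> assume "c \<in> {..<N}" "\<psi> \<in> {..<3::nat}"
    then have "c * 3 + \<psi> < N * 3" by simp
    then show "kron B (1\<^sub>m 3) $$ (i, c * 3 + \<psi>) * stack N x $ (c * 3 + \<psi>)
        = B $$ (i div 3, c) * ((1\<^sub>m 3 :: 'a mat) $$ (i mod 3, \<psi>) * x (Suc c) $ \<psi>)"
      using i \<open>\<psi> \<in> {..<3}\<close> by (simp add: index_kron[OF B one_carrier_mat] mult.commute)
  qed
  also have "\<dots> = (\<Sum>c<N. B $$ (i div 3, c) * x (Suc c) $ (i mod 3))"
  proof (intro sum.cong refl)
    fix c
    have "(\<Sum>\<psi><3. B $$ (i div 3, c) * ((1\<^sub>m 3 :: 'a mat) $$ (i mod 3, \<psi>) * x (Suc c) $ \<psi>))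
        = (\<Sum>\<psi><3. if i mod 3 = \<psi> then B $$ (i div 3, c) * x (Suc c) $ \<psi> else 0)"
      by (rule sum.cong) auto
    then show "(\<Sum>\<psi><3. B $$ (i div 3, c) * ((1\<^sub>m 3 :: 'a mat) $$ (i mod 3, \<psi>) * x (Suc c) $ \<psi>))
        = B $$ (i div 3, c) * x (Suc c) $ (i mod 3)" by simp
  qed
  finally show ?thesis .
qed

lemma sum_children:
  "(\<Sum>k\<in>children N par n. f k) = (\<Sum>c<N. if par (Suc c) = n then f (Suc c) else 0)"
proof -
  have "children N par n = {k \<in> {Suc 0..N}. par k = n}"
    by (auto simp: children_def)
  then show ?thesis
    by (simp only: sum.inter_filter[OF finite_atLeastAtMost] sum.atLeast1_atMost_eq)
qed

lemma kron_red_incidence_mult_stack: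
  assumes tree: "\<And>n. n \<in> {1..N} \<Longrightarrow> par n < n"
    and x: "\<And>n. n \<in> {1..N} \<Longrightarrow> x n \<in> carrier_vec 3"
  shows "kron (red_incidence N par) (1\<^sub>m 3) *\<^sub>v (stack N x - vec (3 * N) (\<lambda>_. x0))
    = stack N (\<lambda>n. (if par n = 0 then vec 3 (\<lambda>_. x0) else x (par n)) - x n)"
proof (rule eq_vecI)
  fix i assume "i < dim_vec (stack N (\<lambda>n. (if par n = 0 then vec 3 (\<lambda>_. x0) else x (par n)) - x n))"
  then have i: "i < 3 * N" by simp
  define m \<phi> where "m = i div 3" and "\<phi> = i mod 3"
  define u where "u c = x (Suc c) $ \<phi> - x0" for c
  have m: "m < N" and \<phi>: "\<phi> < 3" and pm: "par (Suc m) < Suc m"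
    using i tree[of "Suc m"] by (auto simp: m_def \<phi>_def)
  have "stack N x - vec (3 * N) (\<lambda>_. x0) = stack N (\<lambda>n. x n - vec 3 (\<lambda>_. x0))"
    using x by (intro eq_vecI) auto
  then have "(kron (red_incidence N par) (1\<^sub>m 3) *\<^sub>v (stack N x - vec (3 * N) (\<lambda>_. x0))) $ i
      = (\<Sum>c<N. red_incidence N par $$ (m, c) * u c)"
    using i x by (simp add: index_kron_one_mult_stack[OF red_incidence_carrier] m_def \<phi>_def u_def)
  also have "\<dots> = (\<Sum>c<N. (if c = par (Suc m) - 1 then (if par (Suc m) = 0 then 0 else u c) else 0)
      - (if c = m then u c else 0))"
    by (rule sum.cong) (auto simp: red_incidence_def m)
  also have "\<dots> = (if par (Suc m) = 0 then 0 else u (par (Suc m) - 1)) - u m"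
    using m pm by (simp add: sum_subtractf)
  also have "\<dots> = stack N (\<lambda>n. (if par n = 0 then vec 3 (\<lambda>_. x0) else x (par n)) - x n) $ i"
    using i \<phi> x[of "Suc m"] x[of "par (Suc m)"] m pm by (auto simp: m_def \<phi>_def u_def)
  finally show "(kron (red_incidence N par) (1\<^sub>m 3) *\<^sub>v (stack N x - vec (3 * N) (\<lambda>_. x0))) $ i
      = stack N (\<lambda>n. (if par n = 0 then vec 3 (\<lambda>_. x0) else x (par n)) - x n) $ i" .
qed (simp add: red_incidence_def kron_def)

lemma transpose_red_incidence_mult_stack:
  "kron (transpose_mat (red_incidence N par)) (1\<^sub>m 3) *\<^sub>v stack N x
    = stack N (\<lambda>n. vec 3 (\<lambda>\<phi>. (\<Sum>k\<in>children N par n. x k $ \<phi>) - x n $ \<phi>))"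
proof (rule eq_vecI)
  fix i assume "i < dim_vec (stack N (\<lambda>n. vec 3 (\<lambda>\<phi>. (\<Sum>k\<in>children N par n. x k $ \<phi>) - x n $ \<phi>)))"
  then have i: "i < 3 * N" by simp
  define m \<phi> where "m = i div 3" and "\<phi> = i mod 3"
  have m: "m < N" and \<phi>: "\<phi> < 3" using i by (auto simp: m_def \<phi>_def)
  have "(kron (transpose_mat (red_incidence N par)) (1\<^sub>m 3) *\<^sub>v stack N x) $ i
      = (\<Sum>c<N. red_incidence N par $$ (c, m) * x (Suc c) $ \<phi>)"
    using i red_incidence_carrier[of N par]
    by (simp add: index_kron_one_mult_stack[of _ N] m_def \<phi>_def)
  also have "\<dots> = (\<Sum>c<N. (if par (Suc c) = Suc m then x (Suc c) $ \<phi> else 0) - (if c = m then x (Suc c) $ \<phi> else 0))"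
    by (rule sum.cong) (auto simp: red_incidence_def m)
  also have "\<dots> = stack N (\<lambda>n. vec 3 (\<lambda>\<phi>. (\<Sum>k\<in>children N par n. x k $ \<phi>) - x n $ \<phi>)) $ i"
    using i m \<phi> by (simp add: sum_subtractf sum_children flip: m_def \<phi>_def)
  finally show "(kron (transpose_mat (red_incidence N par)) (1\<^sub>m 3) *\<^sub>v stack N x) $ i
      = stack N (\<lambda>n. vec 3 (\<lambda>\<phi>. (\<Sum>k\<in>children N par n. x k $ \<phi>) - x n $ \<phi>)) $ i" .
qed (simp add: red_incidence_def kron_def)

lemma bdiag_mult_stack:
  assumes Y: "\<And>n. Y n \<in> carrier_mat 3 3" and x: "\<And>n. n \<in> {1..N} \<Longrightarrow> x n \<in> carrier_vec 3"
  shows "bdiag N Y *\<^sub>v stack N x = stack N (\<lambda>n. Y n *\<^sub>v x n)"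
proof (rule eq_vecI)
  fix i assume "i < dim_vec (stack N (\<lambda>n. Y n *\<^sub>v x n))"
  then have i: "i < 3 * N" by simp
  define m \<phi> where "m = i div 3" and "\<phi> = i mod 3"
  have m: "Suc m \<in> {1..N}" and \<phi>: "\<phi> < 3" using i by (auto simp: m_def \<phi>_def)
  have "(bdiag N Y *\<^sub>v stack N x) $ i = (\<Sum>l<N * 3. bdiag N Y $$ (i, l) * stack N x $ l)"
    using bdiag_carrier[of Y 3 N, OF Y] i by (simp add: scalar_prod_def atLeast0LessThan mult.commute)
  also have "\<dots> = (\<Sum>c<N. \<Sum>\<psi><3. if c = m then Y (Suc m) $$ (\<phi>, \<psi>) * x (Suc m) $ \<psi> else 0)"
    unfolding sum_lessThan_mult_nat
  proof (intro sum.cong refl)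
    fix c \<psi> assume "c \<in> {..<N}" "\<psi> \<in> {..<3::nat}"
    then have l: "c * 3 + \<psi> < 3 * N" and "\<psi> < 3" by auto
    then show "bdiag N Y $$ (i, c * 3 + \<psi>) * stack N x $ (c * 3 + \<psi>)
        = (if c = m then Y (Suc m) $$ (\<phi>, \<psi>) * x (Suc m) $ \<psi> else 0)"
      using index_bdiag[where Y = Y and k = 3, OF Y i l] by (simp add: m_def \<phi>_def)
  qed
  also have "\<dots> = (\<Sum>c<N. if c = m then (\<Sum>\<psi><3. Y (Suc m) $$ (\<phi>, \<psi>) * x (Suc m) $ \<psi>) else 0)"
    by (rule sum.cong) auto
  also have "\<dots> = (\<Sum>\<psi><3. Y (Suc m) $$ (\<phi>, \<psi>) * x (Suc m) $ \<psi>)"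
    using m by simp
  also have "\<dots> = stack N (\<lambda>n. Y n *\<^sub>v x n) $ i"
    using i \<phi> Y[of "Suc m"] x[OF m] by (simp add: scalar_prod_def atLeast0LessThan flip: m_def \<phi>_def)
  finally show "(bdiag N Y *\<^sub>v stack N x) $ i = stack N (\<lambda>n. Y n *\<^sub>v x n) $ i" .
qed (simp add: carrier_matD[OF bdiag_carrier[of Y 3 N, OF Y]])

section \<open>The linearized flow equations\<close>

lemma smult_mat_mult_mat_vec:
  "dim_vec v = dim_col A \<Longrightarrow> (c \<cdot>\<^sub>m A) *\<^sub>v v = c \<cdot>\<^sub>v (A *\<^sub>v (v :: 'a :: comm_semiring_0 vec))"
  by (rule eq_vecI) (auto simp: scalar_prod_def sum_distrib_left ac_simps)

lemma solve_incidence_system: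
  fixes K M G H :: "'a :: field mat"
  assumes K: "K \<in> carrier_mat n n" and M: "M \<in> carrier_mat n n"
    and G: "G \<in> carrier_mat n n" and H: "H \<in> carrier_mat n n"
    and MK: "M * K = - 1\<^sub>m n" and KM: "K * M = - 1\<^sub>m n"
    and w: "w \<in> carrier_vec n" and x: "x \<in> carrier_vec n" and y: "y \<in> carrier_vec n"
    and drop: "K *\<^sub>v w = c \<cdot>\<^sub>v (G *\<^sub>v x + H *\<^sub>v y)"
    and px: "transpose_mat K *\<^sub>v x = p" and qy: "transpose_mat K *\<^sub>v y = q"
  shows "w = (c \<cdot>\<^sub>m (M * G * transpose_mat M)) *\<^sub>v p + (c \<cdot>\<^sub>m (M * H * transpose_mat M)) *\<^sub>v q"
proof -
  define B where "B = - M"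
  have B: "B \<in> carrier_mat n n" and BK: "B * K = 1\<^sub>m n" and KB: "K * B = 1\<^sub>m n"
    using M K MK KM by (auto simp: B_def)
  have BtKt: "transpose_mat B * transpose_mat K = 1\<^sub>m n"
    using transpose_mult[OF K B] KB by simp
  have p: "p \<in> carrier_vec n" and q: "q \<in> carrier_vec n"
    using px qy K x y by auto
  have xp: "x = transpose_mat B *\<^sub>v p" and yq: "y = transpose_mat B *\<^sub>v q"
    unfolding px[symmetric] qy[symmetric] using B K BtKt x y
    by (simp_all flip: assoc_mult_mat_vec[of _ n n _ n])
  have "w = B *\<^sub>v (K *\<^sub>v w)"
    using w B K BK by (simp flip: assoc_mult_mat_vec[of _ n n _ n])
  also have "\<dots> = c \<cdot>\<^sub>v (B *\<^sub>v (G *\<^sub>v (transpose_mat B *\<^sub>v p)) + B *\<^sub>v (H *\<^sub>v (transpose_mat B *\<^sub>v q)))"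
    unfolding drop xp yq using B G H p q by (simp add: mult_mat_vec mult_add_distrib_mat_vec)
  also have "\<dots> = (c \<cdot>\<^sub>m (B * G * transpose_mat B)) *\<^sub>v p + (c \<cdot>\<^sub>m (B * H * transpose_mat B)) *\<^sub>v q"
    using B G H p q by (simp add: smult_mat_mult_mat_vec smult_add_distrib_vec[of _ n] assoc_mult_mat_vec[of _ n n _ n])
  finally show ?thesis
    using M G H by (simp add: B_def transpose_uminus)
qed

lemma Re_cnj_mult_mat_vec:
  assumes "Z \<in> carrier_mat n m" and "s \<in> carrier_vec m"
  shows "map_vec Re (map_mat cnj Z *\<^sub>v s) = map_mat Re Z *\<^sub>v map_vec Re s + map_mat Im Z *\<^sub>v map_vec Im s"
  using assms by (intro eq_vecI) (auto simp: scalar_prod_def sum.distrib)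

lemma Ztilde_carrier: "Ztilde Z \<in> carrier_mat 3 3"
  unfolding Ztilde_def carrier_mat_def by (simp add: mat_diag_def)

lemma stacked_voltage_drops:
  assumes tree: "\<And>n. n \<in> {1..N} \<Longrightarrow> par n < n"
    and v: "\<And>n. n \<in> {1..N} \<Longrightarrow> v n \<in> carrier_vec 3"
    and S: "\<And>n. n \<in> {1..N} \<Longrightarrow> S n \<in> carrier_vec 3"
    and voltage: "\<And>n. n \<in> {1..N} \<Longrightarrow>
       (if par n = 0 then vec 3 (\<lambda>_. v0) else v (par n)) - v n
         = 2 \<cdot>\<^sub>v map_vec Re (map_mat cnj (Ztilde (Z n)) *\<^sub>v S n)"
  shows "kron (red_incidence N par) (1\<^sub>m 3) *\<^sub>v (stack N v - vec (3 * N) (\<lambda>_. v0))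
    = 2 \<cdot>\<^sub>v (bdiag N (\<lambda>n. map_mat Re (Ztilde (Z n))) *\<^sub>v stack N (\<lambda>n. map_vec Re (S n))
           + bdiag N (\<lambda>n. map_mat Im (Ztilde (Z n))) *\<^sub>v stack N (\<lambda>n. map_vec Im (S n)))"
    (is "_ = 2 \<cdot>\<^sub>v (bdiag N ?Yr *\<^sub>v stack N ?ReS + bdiag N ?Yi *\<^sub>v stack N ?ImS)")
proof -
  have "kron (red_incidence N par) (1\<^sub>m 3) *\<^sub>v (stack N v - vec (3 * N) (\<lambda>_. v0))
      = stack N (\<lambda>n. (if par n = 0 then vec 3 (\<lambda>_. v0) else v (par n)) - v n)"
    by (rule kron_red_incidence_mult_stack[OF tree v])
  also have "\<dots> = stack N (\<lambda>n. 2 \<cdot>\<^sub>v (?Yr n *\<^sub>v ?ReS n + ?Yi n *\<^sub>v ?ImS n))"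
    by (rule stack_eqI) (simp add: voltage S Re_cnj_mult_mat_vec[OF Ztilde_carrier])
  also have "\<dots> = 2 \<cdot>\<^sub>v (stack N (\<lambda>n. ?Yr n *\<^sub>v ?ReS n) + stack N (\<lambda>n. ?Yi n *\<^sub>v ?ImS n))"
    by (rule eq_vecI) (auto simp: carrier_matD[OF Ztilde_carrier])
  also have "\<dots> = 2 \<cdot>\<^sub>v (bdiag N ?Yr *\<^sub>v stack N ?ReS + bdiag N ?Yi *\<^sub>v stack N ?ImS)"
  proof -
    have "?Yr n \<in> carrier_mat 3 3" "?Yi n \<in> carrier_mat 3 3" for n
      using Ztilde_carrier by auto
    moreover have "?ReS n \<in> carrier_vec 3" "?ImS n \<in> carrier_vec 3" if "n \<in> {1..N}" for n
      using S[OF that] by auto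
    ultimately show ?thesis by (simp only: bdiag_mult_stack)
  qed
  finally show ?thesis .
qed

lemma stacked_power_balance:
  assumes S: "\<And>n. n \<in> {1..N} \<Longrightarrow> S n \<in> carrier_vec 3"
    and power: "\<And>n. n \<in> {1..N} \<Longrightarrow>
       vec 3 (\<lambda>i. Complex (p n $ i) (q n $ i))
         = finsum_vec TYPE(complex) 3 S (children N par n) - S n"
  shows "transpose_mat (kron (red_incidence N par) (1\<^sub>m 3)) *\<^sub>v stack N (\<lambda>n. map_vec Re (S n)) = stack N p"
    and "transpose_mat (kron (red_incidence N par) (1\<^sub>m 3)) *\<^sub>v stack N (\<lambda>n. map_vec Im (S n)) = stack N q"
proof -
  have balance: "Complex (p n $ \<phi>) (q n $ \<phi>) = (\<Sum>k\<in>children N par n. S k $ \<phi>) - S n $ \<phi>"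
    if n: "n \<in> {1..N}" and \<phi>: "\<phi> < 3" for n \<phi>
  proof -
    have "S \<in> children N par n \<rightarrow> carrier_vec 3" using S by (auto simp: children_def)
    then show ?thesis
      using arg_cong[OF power[OF n], of "\<lambda>x. x $ \<phi>"] index_finsum_vec[of _ \<phi> 3 S] S[OF n] \<phi>
      by (simp add: children_def)
  qed
  have balance_Re: "p n $ \<phi> = (\<Sum>k\<in>children N par n. Re (S k $ \<phi>)) - Re (S n $ \<phi>)"
    and balance_Im: "q n $ \<phi> = (\<Sum>k\<in>children N par n. Im (S k $ \<phi>)) - Im (S n $ \<phi>)"
    if "n \<in> {1..N}" "\<phi> < 3" for n \<phi>
    using arg_cong[OF balance[OF that], of Re] arg_cong[OF balance[OF that], of Im] by simp_all
  have components: "(\<Sum>k\<in>children N par n. map_vec f (S k) $ \<phi>) = (\<Sum>k\<in>children N par n. f (S k $ \<phi>))"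
    if "\<phi> < 3" for f :: "complex \<Rightarrow> real" and n \<phi>
    using that by (intro sum.cong refl) (simp add: children_def carrier_vecD[OF S])
  show "transpose_mat (kron (red_incidence N par) (1\<^sub>m 3)) *\<^sub>v stack N (\<lambda>n. map_vec Re (S n)) = stack N p"
    "transpose_mat (kron (red_incidence N par) (1\<^sub>m 3)) *\<^sub>v stack N (\<lambda>n. map_vec Im (S n)) = stack N q"
    unfolding transpose_kron transpose_one transpose_red_incidence_mult_stack
    by (rule stack_eqI; simp add: carrier_vecD[OF S] components balance_Re balance_Im)+
qed

theorem proposition2:
  fixes N :: nat and par :: "nat \<Rightarrow> nat"
    and Z :: "nat \<Rightarrow> complex mat"
    and p q v :: "nat \<Rightarrow> real vec" and S :: "nat \<Rightarrow> complex vec"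
    and v0 :: real
  assumes tree: "\<And>n. n \<in> {1..N} \<Longrightarrow> par n < n"
    and Zdim: "\<And>n. n \<in> {1..N} \<Longrightarrow> Z n \<in> carrier_mat 3 3"
    and Zsym: "\<And>n. n \<in> {1..N} \<Longrightarrow> transpose_mat (Z n) = Z n"
    and dims: "\<And>n. n \<in> {1..N} \<Longrightarrow>
       p n \<in> carrier_vec 3 \<and> q n \<in> carrier_vec 3 \<and> v n \<in> carrier_vec 3 \<and> S n \<in> carrier_vec 3"
    and power: "\<And>n. n \<in> {1..N} \<Longrightarrow>
       vec 3 (\<lambda>i. Complex (p n $ i) (q n $ i))
         = finsum_vec TYPE(complex) 3 S (children N par n) - S n"
    and voltage: "\<And>n. n \<in> {1..N} \<Longrightarrow>
       (if par n = 0 then vec 3 (\<lambda>_. v0) else v (par n)) - v n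
         = 2 \<cdot>\<^sub>v map_vec Re (map_mat cnj (Ztilde (Z n)) *\<^sub>v S n)"
  shows "stack N v = Rmat N par Z *\<^sub>v stack N p + Xmat N par Z *\<^sub>v stack N q + vec (3*N) (\<lambda>_. v0)"
proof -
  have v: "\<And>n. n \<in> {1..N} \<Longrightarrow> v n \<in> carrier_vec 3" and S: "\<And>n. n \<in> {1..N} \<Longrightarrow> S n \<in> carrier_vec 3"
    using dims by auto
  have K: "kron (red_incidence N par) (1\<^sub>m 3) \<in> carrier_mat (3 * N) (3 * N)"
    using kron_carrier_mat[OF red_incidence_carrier one_carrier_mat[of 3]] by (simp add: mult.commute)
  have Y: "bdiag N (\<lambda>n. map_mat f (Ztilde (Z n))) \<in> carrier_mat (3 * N) (3 * N)" for f :: "complex \<Rightarrow> real"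
    using bdiag_carrier[of "\<lambda>n. map_mat f (Ztilde (Z n))" 3 N] Ztilde_carrier by simp
  have w: "stack N v - vec (3 * N) (\<lambda>_. v0) \<in> carrier_vec (3 * N)"
    using stack_carrier by (rule minus_carrier_vec) simp
  note M = Mmat_inverse[of N par, OF tree]
  note drops = stacked_voltage_drops[of N par v S v0 Z, OF tree v S voltage]
  note balance = stacked_power_balance[of N S p q par, OF S power]
  have "stack N v = (stack N v - vec (3 * N) (\<lambda>_. v0)) + vec (3 * N) (\<lambda>_. v0)"
    by (rule eq_vecI) auto
  also have "stack N v - vec (3 * N) (\<lambda>_. v0) = Rmat N par Z *\<^sub>v stack N p + Xmat N par Z *\<^sub>v stack N q"
    unfolding Rmat_def Xmat_def
    by (rule solve_incidence_system[OF K M(1) Y Y M(2,3) w stack_carrier stack_carrier drops balance])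
  finally show ?thesis .
qed

end
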